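(* Let $G$ be a connected graph of order $n\geq 2$. Then $\mathrm{ldim}_f(G)\geq \dfrac{n}{n-\mathrm{ldim}(G)+1}$.
   Context: All graphs are finite, simple and connected; $d$ is the shortest-path distance. For an edge $uv$, $L(uv)=\{x\in V(G): d(u,x)\neq d(v,x)\}$. A set $W\subseteq V(G)$ is a local resolving set if $W\cap L(uv)\neq\emptyset$ for every edge $uv$; $\mathrm{ldim}(G)$ is the minimum cardinality of a local resolving set. A function $f:V(G)\to[0,1]$ is a local resolving function if $\sum_{x\in L(uv)}f(x)\geq 1$ for every edge $uv$; $\mathrm{ldim}_f(G)$ is the minimum of $\sum_v f(v)$ over all local resolving functions. *)

theory Defs
  imports Main "HOL-Library.Extended_Real" Complex_Main
begin

definition simple_graph :: "'a set \<Rightarrow> ('a \<Rightarrow> 'a \<Rightarrow> bool) \<Rightarrow> bool" where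
  "simple_graph V E \<longleftrightarrow> finite V \<and> (\<forall>u v. E u v \<longrightarrow> u \<in> V \<and> v \<in> V)
     \<and> (\<forall>u v. E u v \<longrightarrow> E v u) \<and> (\<forall>u. \<not> E u u)"

fun walk :: "('a \<Rightarrow> 'a \<Rightarrow> bool) \<Rightarrow> 'a list \<Rightarrow> bool" where
  "walk E [] = False"
| "walk E [x] = True"
| "walk E (x # y # xs) = (E x y \<and> walk E (y # xs))"

definition connected_graph :: "'a set \<Rightarrow> ('a \<Rightarrow> 'a \<Rightarrow> bool) \<Rightarrow> bool" where
  "connected_graph V E \<longleftrightarrow> V \<noteq> {} \<and>
     (\<forall>u\<in>V. \<forall>v\<in>V. \<exists>xs. walk E xs \<and> set xs \<subseteq> V \<and> hd xs = u \<and> last xs = v)"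

definition gdist :: "'a set \<Rightarrow> ('a \<Rightarrow> 'a \<Rightarrow> bool) \<Rightarrow> 'a \<Rightarrow> 'a \<Rightarrow> nat" where
  "gdist V E u v = (LEAST k. \<exists>xs. walk E xs \<and> set xs \<subseteq> V \<and> hd xs = u \<and> last xs = v
                                 \<and> length xs = Suc k)"

definition Lset :: "'a set \<Rightarrow> ('a \<Rightarrow> 'a \<Rightarrow> bool) \<Rightarrow> 'a \<Rightarrow> 'a \<Rightarrow> 'a set" where
  "Lset V E u v = {x \<in> V. gdist V E u x \<noteq> gdist V E v x}"

definition local_resolving_set :: "'a set \<Rightarrow> ('a \<Rightarrow> 'a \<Rightarrow> bool) \<Rightarrow> 'a set \<Rightarrow> bool" where
  "local_resolving_set V E W \<longleftrightarrow> W \<subseteq> V \<and> (\<forall>u v. E u v \<longrightarrow> W \<inter> Lset V E u v \<noteq> {})"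

definition ldim :: "'a set \<Rightarrow> ('a \<Rightarrow> 'a \<Rightarrow> bool) \<Rightarrow> nat" where
  "ldim V E = Min (card ` {W. local_resolving_set V E W})"

definition local_resolving_function :: "'a set \<Rightarrow> ('a \<Rightarrow> 'a \<Rightarrow> bool) \<Rightarrow> ('a \<Rightarrow> real) \<Rightarrow> bool" where
  "local_resolving_function V E f \<longleftrightarrow> (\<forall>x\<in>V. 0 \<le> f x \<and> f x \<le> 1) \<and>
     (\<forall>u v. E u v \<longrightarrow> (\<Sum>x\<in>Lset V E u v. f x) \<ge> 1)"

text \<open>The minimum of the total weight over all local resolving functions
  (the infimum is attained since this is a linear program; we use Inf).\<close>
definition ldim_f :: "'a set \<Rightarrow> ('a \<Rightarrow> 'a \<Rightarrow> bool) \<Rightarrow> real" where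
  "ldim_f V E = Inf ((\<lambda>f. \<Sum>x\<in>V. f x) ` {f. local_resolving_function V E f})"

end

theory Submission
  imports Defs
begin

text \<open>Let \<open>k = ldim G\<close>. No set \<open>T\<close> of \<open>k - 1\<close> vertices is a local resolving set, so some
  \<open>L(uv)\<close> avoids \<open>T\<close>, and a local resolving function \<open>f\<close> therefore puts weight at least 1
  on the complement of \<open>T\<close>. Averaging over all \<open>(k - 1)\<close>-subsets \<open>T\<close>, each vertex lies outside
  \<open>T\<close> for a fraction \<open>(n - k + 1) / n\<close> of them, whence \<open>(n - k + 1) / n \<cdot> \<Sum>f \<ge> 1\<close>.\<close>

lemma sum_ge_if_heavy_off_every_subset:
  fixes f :: "'a \<Rightarrow> real"
  assumes fin: "finite V" and j: "j < card V"
    and nonneg: "\<And>x. x \<in> V \<Longrightarrow> 0 \<le> f x"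
    and heavy: "\<And>T. T \<subseteq> V \<Longrightarrow> card T = j \<Longrightarrow> 1 \<le> sum f (V - T)"
  shows "real (card V) / real (card V - j) \<le> sum f V"
proof -
  define n where "n = card V"
  define \<T> where "\<T> = {T. T \<subseteq> V \<and> card T = j}"
  have fin_\<T>: "finite \<T>" unfolding \<T>_def using fin by simp
  have avoiding: "card {T \<in> \<T>. x \<notin> T} = (n - 1) choose j" if "x \<in> V" for x
  proof -
    have "{T \<in> \<T>. x \<notin> T} = {T. T \<subseteq> V - {x} \<and> card T = j}" unfolding \<T>_def by auto
    then show ?thesis using n_subsets[of "V - {x}" j] fin that unfolding n_def by simp
  qed
  have "real (n choose j) = (\<Sum>T\<in>\<T>. 1)"
    unfolding \<T>_def n_def using n_subsets[OF fin] by simp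
  also have "\<dots> \<le> (\<Sum>T\<in>\<T>. sum f (V - T))"
    using heavy by (intro sum_mono) (auto simp: \<T>_def)
  also have "\<dots> = (\<Sum>x\<in>V. \<Sum>T\<in>{T \<in> \<T>. x \<notin> T}. f x)"
    using sum.swap_restrict[OF fin_\<T> fin, of "\<lambda>T x. f x" "\<lambda>T x. x \<notin> T"]
    by (simp add: set_diff_eq)
  also have "\<dots> = sum f V * real ((n - 1) choose j)"
    by (simp add: avoiding sum_distrib_right mult.commute)
  finally have count: "real (n choose j) \<le> sum f V * real ((n - 1) choose j)" .
  have absorb: "real (n - j) * real (n choose j) = real n * real ((n - 1) choose j)"
    using binomial_absorb_comp[of n j] by (metis of_nat_mult)
  have "real n * real ((n - 1) choose j) \<le> real (n - j) * sum f V * real ((n - 1) choose j)"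
    using mult_left_mono[OF count, of "real (n - j)"] by (simp add: absorb mult.assoc)
  moreover have "0 < real ((n - 1) choose j)" "0 < real (n - j)"
    using j unfolding n_def by auto
  ultimately have "real n \<le> real (n - j) * sum f V"
    using mult_right_le_imp_le by blast
  with \<open>0 < real (n - j)\<close> show ?thesis
    unfolding n_def by (simp add: pos_divide_le_eq mult.commute)
qed

lemma walk_hd_eq_last: "walk E xs \<Longrightarrow> length xs = Suc 0 \<Longrightarrow> hd xs = last xs"
  by (cases xs) auto

lemma walk_has_edge: "walk E xs \<Longrightarrow> hd xs \<noteq> last xs \<Longrightarrow> \<exists>a b. E a b"
  by (induction E xs rule: walk.induct) auto

lemma gdist_self: "u \<in> V \<Longrightarrow> gdist V E u u = 0"
  unfolding gdist_def by (rule Least_eq_0) (rule exI[of _ "[u]"], simp)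

lemma gdist_pos:
  assumes "connected_graph V E" "u \<in> V" "v \<in> V" "u \<noteq> v"
  shows "gdist V E u v \<noteq> 0"
proof
  obtain xs where xs: "walk E xs" "set xs \<subseteq> V" "hd xs = u" "last xs = v"
    using assms unfolding connected_graph_def by blast
  then have "\<exists>ys. walk E ys \<and> set ys \<subseteq> V \<and> hd ys = u \<and> last ys = v
               \<and> length ys = Suc (length xs - 1)"
    by (intro exI[of _ xs]) (cases xs, auto)
  then have "\<exists>ys. walk E ys \<and> set ys \<subseteq> V \<and> hd ys = u \<and> last ys = v
               \<and> length ys = Suc (gdist V E u v)"
    unfolding gdist_def by (rule LeastI)
  moreover assume "gdist V E u v = 0"
  ultimately show False using walk_hd_eq_last assms(4) by force
qed

lemma Lset_subset: "Lset V E u v \<subseteq> V"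
  unfolding Lset_def by auto

lemma edge_end_in_Lset:
  assumes "simple_graph V E" "connected_graph V E" "E u v"
  shows "u \<in> Lset V E u v"
proof -
  have "u \<in> V" "v \<in> V" "u \<noteq> v" using assms unfolding simple_graph_def by metis+
  then show ?thesis
    unfolding Lset_def using gdist_self[of u V E] gdist_pos[OF assms(2), of v u] by auto
qed

lemma connected_graph_has_edge:
  assumes "connected_graph V E" "finite V" "card V \<ge> 2"
  obtains u v where "E u v"
proof -
  obtain a b where "a \<in> V" "b \<in> V" "a \<noteq> b"
    using assms(2,3) by (metis card_le_Suc0_iff_eq not_less_eq_eq numeral_2_eq_2)
  then obtain xs where "walk E xs" "hd xs = a" "last xs = b"
    using assms(1) unfolding connected_graph_def by blast
  with \<open>a \<noteq> b\<close> have "\<exists>u v. E u v" using walk_has_edge by blast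
  then show ?thesis using that by blast
qed

lemma local_resolving_set_vertices:
  assumes "simple_graph V E" "connected_graph V E"
  shows "local_resolving_set V E V"
  unfolding local_resolving_set_def
  using edge_end_in_Lset[OF assms] Lset_subset[of V E] by (metis disjoint_iff subsetD order_refl)

lemma finite_local_resolving_set_cards:
  "finite V \<Longrightarrow> finite (card ` {W. local_resolving_set V E W})"
  by (rule finite_imageI, rule finite_subset[of _ "Pow V"]) (auto simp: local_resolving_set_def)

lemma
  assumes "simple_graph V E" "connected_graph V E"
  shows ldim_le_card: "ldim V E \<le> card V"
    and ldim_attained: "\<exists>W. local_resolving_set V E W \<and> card W = ldim V E"
proof -
  have fin: "finite (card ` {W. local_resolving_set V E W})"
    using assms(1) finite_local_resolving_set_cards unfolding simple_graph_def by blast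
  show "ldim V E \<le> card V"
    unfolding ldim_def using local_resolving_set_vertices[OF assms] fin by (intro Min_le) auto
  have "ldim V E \<in> card ` {W. local_resolving_set V E W}"
    unfolding ldim_def using local_resolving_set_vertices[OF assms] fin by (intro Min_in) auto
  then show "\<exists>W. local_resolving_set V E W \<and> card W = ldim V E" by auto
qed

lemma not_local_resolving_set_if_card_less_ldim:
  assumes "finite V" "card T < ldim V E"
  shows "\<not> local_resolving_set V E T"
  using assms finite_local_resolving_set_cards[OF assms(1), of E] unfolding ldim_def
  by (metis (mono_tags, lifting) Min_le image_eqI linorder_not_le mem_Collect_eq)

lemma ldim_pos:
  assumes "simple_graph V E" "connected_graph V E" "card V \<ge> 2"
  shows "1 \<le> ldim V E"
proof (rule ccontr)
  have fin: "finite V" using assms(1) unfolding simple_graph_def by blast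
  obtain W where "local_resolving_set V E W" "card W = ldim V E"
    using ldim_attained[OF assms(1,2)] by blast
  moreover assume "\<not> 1 \<le> ldim V E"
  moreover have "finite W"
    using \<open>local_resolving_set V E W\<close> fin finite_subset
    unfolding local_resolving_set_def by blast
  ultimately have "local_resolving_set V E {}" by (metis card_0_eq less_one not_le)
  moreover obtain u v where "E u v" using connected_graph_has_edge[OF assms(2) fin assms(3)] .
  ultimately show False unfolding local_resolving_set_def by blast
qed

lemma local_resolving_function_heavy_off_non_resolving:
  assumes "local_resolving_function V E f" "finite V" "T \<subseteq> V"
    and "\<not> local_resolving_set V E T"
  shows "1 \<le> sum f (V - T)"
proof -
  obtain u v where uv: "E u v" "T \<inter> Lset V E u v = {}"
    using assms(3,4) unfolding local_resolving_set_def by auto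
  have "1 \<le> sum f (Lset V E u v)"
    using assms(1) uv(1) unfolding local_resolving_function_def by blast
  also have "\<dots> \<le> sum f (V - T)"
    using uv(2) Lset_subset[of V E u v] assms(1,2)
    by (intro sum_mono2) (auto simp: local_resolving_function_def)
  finally show ?thesis .
qed

lemma local_resolving_function_one:
  assumes "simple_graph V E" "connected_graph V E"
  shows "local_resolving_function V E (\<lambda>_. 1)"
  unfolding local_resolving_function_def
proof (intro conjI allI impI ballI)
  fix u v assume "E u v"
  then have "u \<in> Lset V E u v" by (rule edge_end_in_Lset[OF assms])
  moreover have "finite (Lset V E u v)"
    using Lset_subset assms(1) finite_subset unfolding simple_graph_def by metis
  ultimately have "0 < card (Lset V E u v)" by (auto simp: card_gt_0_iff)
  then show "1 \<le> (\<Sum>x\<in>Lset V E u v. (1::real))" by simp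
qed auto

theorem theorem2p12:
  fixes V :: "'a set" and E :: "'a \<Rightarrow> 'a \<Rightarrow> bool"
  assumes "simple_graph V E" and "connected_graph V E" and "card V \<ge> 2"
  shows "ldim_f V E \<ge> real (card V) / (real (card V) - real (ldim V E) + 1)"
proof -
  define k where "k = ldim V E"
  have fin: "finite V" using assms(1) unfolding simple_graph_def by blast
  have k: "1 \<le> k" "k \<le> card V"
    unfolding k_def using ldim_pos[OF assms] ldim_le_card[OF assms(1,2)] by auto
  have "real (card V) / (real (card V) - real k + 1) \<le> sum f V"
    if "local_resolving_function V E f" for f
  proof -
    have "real (card V) / real (card V - (k - 1)) \<le> sum f V"
    proof (rule sum_ge_if_heavy_off_every_subset[OF fin])
      show "k - 1 < card V" using k by linarith
      show "0 \<le> f x" if "x \<in> V" for x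
        using that \<open>local_resolving_function V E f\<close> by (simp add: local_resolving_function_def)
      show "1 \<le> sum f (V - T)" if "T \<subseteq> V" "card T = k - 1" for T
        using that k \<open>local_resolving_function V E f\<close> fin
        by (intro local_resolving_function_heavy_off_non_resolving
              not_local_resolving_set_if_card_less_ldim) (auto simp: k_def)
    qed
    then show ?thesis using k by (simp add: of_nat_diff algebra_simps)
  qed
  then show ?thesis
    unfolding ldim_f_def k_def[symmetric]
    using local_resolving_function_one[OF assms(1,2)] by (intro cInf_greatest) auto
qed

end
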